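(* Let $n\ge2$, $K\in\mathcal S_n$, and let $u\in S^{n-1}$ be such that $h_K$ is twice continuously differentiable in a neighborhood of $u$. Let $x=\nabla h_K(u)\in\partial K$ and $y=x-u\in\partial K^c$, and let $0\le r_1\le\dots\le r_{n-1}\le1$ and $0\le s_1\le\dots\le s_{n-1}\le1$ be the principal radii of curvature of $K$ at $x$ (in normal direction $u$) and of $K^c$ at $y$ (in normal direction $-u$), respectively. Then \[ r_i+s_{n-i}=1,\qquad i=1,\dots,n-1. \]
   Context: $B(x,r)$ is the closed Euclidean ball. For $A\subseteq\mathbb R^n$, $A^c=\bigcap_{x\in A}B(x,1)$. $\mathcal S_n$ is the class of all sets of the form $\bigcap_{x\in A}B(x,1)$, $A\subseteq\mathbb R^n$. $h_K(v)=\sup_{z\in K}\langle z,v\rangle$ is the support function. For a convex body $T$ whose support function is $C^2$ near a unit vector $w$, the principal radii of curvature of $T$ at $\nabla h_T(w)$ (with respect to the normal $w$) are the eigenvalues of the Hessian $\nabla^2h_T(w)$ restricted to $w^\perp$ (the eigenvalue in direction $w$ being $0$). *)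

theory Defs
  imports "HOL-Analysis.Analysis"
begin

definition spindle_class :: "(real^'n) set set" where
  "spindle_class = {K. \<exists>A. K = (\<Inter>a\<in>A. cball a 1)}"

definition ball_dual :: "(real^'n) set \<Rightarrow> (real^'n) set" where
  "ball_dual A = (\<Inter>a\<in>A. cball a 1)"

definition supp :: "(real^'n) set \<Rightarrow> real^'n \<Rightarrow> real" where
  "supp K v = (SUP z\<in>K. z \<bullet> v)"

definition C2_near :: "(real^'n \<Rightarrow> real) \<Rightarrow> real^'n \<Rightarrow> bool" where
  "C2_near f w \<longleftrightarrow> (\<exists>U G H. open U \<and> w \<in> U \<and>
     (\<forall>p\<in>U. (f has_derivative (\<lambda>v. G p \<bullet> v)) (at p)) \<and>
     (\<forall>p\<in>U. (G has_derivative (\<lambda>v. (H p :: real^'n^'n) *v v)) (at p)) \<and>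
     continuous_on U H)"

definition grad :: "(real^'n \<Rightarrow> real) \<Rightarrow> real^'n \<Rightarrow> real^'n" where
  "grad f w = (THE g. (f has_derivative (\<lambda>v. g \<bullet> v)) (at w))"

definition hess :: "(real^'n \<Rightarrow> real) \<Rightarrow> real^'n \<Rightarrow> real^'n^'n" where
  "hess f w = (THE M. (grad f has_derivative (\<lambda>v. M *v v)) (at w))"

text \<open>r 1 \<le> ... \<le> r (n-1) are the principal radii of curvature of T at grad h_T(w)
  w.r.t. normal w: the eigenvalues (with multiplicity, sorted) of the Hessian of h_T at w
  restricted to w^\<bottom>, i.e. there is an orthonormal basis e 1..e (n-1) of w^\<bottom> of eigenvectors.\<close>
definition principal_radii :: "(real^'n) set \<Rightarrow> real^'n \<Rightarrow> (nat \<Rightarrow> real) \<Rightarrow> bool" where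
  "principal_radii T w r \<longleftrightarrow> C2_near (supp T) w \<and>
     (\<forall>i j. 1 \<le> i \<and> i \<le> j \<and> j \<le> CARD('n) - 1 \<longrightarrow> r i \<le> r j) \<and>
     (\<exists>e :: nat \<Rightarrow> real^'n.
        (\<forall>i\<in>{1..CARD('n) - 1}. e i \<bullet> w = 0 \<and> hess (supp T) w *v e i = r i *\<^sub>R e i) \<and>
        (\<forall>i\<in>{1..CARD('n) - 1}. \<forall>j\<in>{1..CARD('n) - 1}. e i \<bullet> e j = (if i = j then 1 else 0)))"

end

theory Submission
  imports Defs
begin

(* Let x be the point of K at which <., u> is maximal. Since K is an intersection of unit
   balls, it is spindle convex, and this forces K into the unit ball centred at x - u. Hence
   y = x - u lies in K^c and maximises <., -u> there, which yields
   h_{K^c}(w) = |w| - h_K(-w). Differentiating twice, the Hessian of h_{K^c} at -u is the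
   Hessian of the norm at u, which is the identity on u^perp, minus the Hessian of h_K at u.
   So on u^perp the two Hessians add up to the identity, and since ordered eigenvalues do not
   depend on the choice of orthonormal eigenbasis (Courant-Fischer), r_i = 1 - s_{n-i}. *)

lemma grad_hess_eqI:
  assumes "open U" "w \<in> U"
    and grad: "\<forall>p\<in>U. (f has_derivative (\<lambda>v. G p \<bullet> v)) (at p)"
    and hess: "(G has_derivative (\<lambda>v. H *v v)) (at w)"
  shows "grad f w = G w" and "hess f w = H"
proof -
  have grad_eq: "grad f p = G p" if "p \<in> U" for p
    unfolding grad_def
  proof (rule the_equality)
    show "(f has_derivative (\<lambda>v. G p \<bullet> v)) (at p)" using grad that by blast
    fix g assume "(f has_derivative (\<lambda>v. g \<bullet> v)) (at p)"
    then have "(\<lambda>v. g \<bullet> v) = (\<lambda>v. G p \<bullet> v)"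
      using grad that has_derivative_unique by blast
    then show "g = G p" by (metis vector_eq_rdot)
  qed
  then show "grad f w = G w" using assms(2) .
  have grad_deriv: "(grad f has_derivative (\<lambda>v. H *v v)) (at w)"
    using has_derivative_transform_within_open[OF hess assms(1,2)] grad_eq by simp
  then show "hess f w = H"
    unfolding hess_def
  proof (rule the_equality)
    fix M assume "(grad f has_derivative (\<lambda>v. M *v v)) (at w)"
    then have "(\<lambda>v. M *v v) = (\<lambda>v. H *v v)"
      using grad_deriv has_derivative_unique by blast
    then show "M = H" by (metis matrix_eq)
  qed
qed

lemma C2_near_has_derivative_grad:
  assumes "C2_near f w"
  shows "(f has_derivative (\<lambda>v. grad f w \<bullet> v)) (at w)"
  using assms grad_hess_eqI(1) unfolding C2_near_def by metis

section \<open>Support functions\<close>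

lemma inner_le_supp:
  assumes "bounded K" "z \<in> K"
  shows "z \<bullet> v \<le> supp K v"
proof -
  obtain B where "\<forall>z\<in>K. norm z \<le> B" using assms(1) bounded_iff by blast
  then have "\<forall>z\<in>K. z \<bullet> v \<le> B * norm v"
    by (metis Cauchy_Schwarz_ineq2 abs_le_iff mult_right_mono norm_ge_zero order_trans)
  then have "bdd_above ((\<lambda>z. z \<bullet> v) ` K)" by (auto intro: bdd_aboveI2)
  then show ?thesis unfolding supp_def using assms(2) by (rule cSUP_upper[rotated])
qed

lemma supp_eq_inner_max:
  assumes "x \<in> K" "\<forall>z\<in>K. z \<bullet> v \<le> x \<bullet> v"
  shows "supp K v = x \<bullet> v"
  unfolding supp_def
  by (rule antisym, rule cSUP_least, use assms in auto, rule cSUP_upper, auto intro: bdd_aboveI2)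

lemma compact_attains_inner_max:
  fixes K :: "'a::real_inner set"
  assumes "compact K" "K \<noteq> {}"
  obtains x where "x \<in> K" "\<forall>z\<in>K. z \<bullet> v \<le> x \<bullet> v"
  using continuous_attains_sup[OF assms, of "\<lambda>z. z \<bullet> v"] continuous_on_inner
    continuous_on_id continuous_on_const by blast

lemma inner_max_in_frontier:
  fixes S :: "'a::real_inner set"
  assumes "x \<in> S" "u \<noteq> 0" "\<forall>z\<in>S. z \<bullet> u \<le> x \<bullet> u"
  shows "x \<in> frontier S"
proof -
  have "x \<notin> interior S"
  proof
    assume "x \<in> interior S"
    then obtain e where "e > 0" "ball x e \<subseteq> S" using mem_interior by blast
    moreover have "x + (e / 2 / norm u) *\<^sub>R u \<in> ball x e" using \<open>e > 0\<close> assms(2) by (simp add: dist_norm)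
    ultimately have "(x + (e / 2 / norm u) *\<^sub>R u) \<bullet> u \<le> x \<bullet> u" using assms(3) by blast
    moreover have "0 < (e / 2 / norm u) * (u \<bullet> u)" using \<open>e > 0\<close> assms(2) by simp
    ultimately show False by (simp add: inner_add_left)
  qed
  then show ?thesis using assms(1) closure_subset by (auto simp: frontier_def)
qed

lemma grad_supp_eq_inner_max:
  assumes "bounded K" "(supp K has_derivative (\<lambda>v. g \<bullet> v)) (at u)"
    and "x \<in> K" "\<forall>z\<in>K. z \<bullet> u \<le> x \<bullet> u"
  shows "g = x"
proof -
  have "((\<lambda>w. supp K w - x \<bullet> w) has_derivative (\<lambda>v. g \<bullet> v - x \<bullet> v)) (at u)"
    using assms(2) by (auto intro!: derivative_eq_intros)
  moreover have "\<forall>w\<in>UNIV. supp K u - x \<bullet> u \<le> supp K w - x \<bullet> w"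
    using inner_le_supp[OF assms(1,3)] supp_eq_inner_max[OF assms(3,4)] by simp
  ultimately have "(\<lambda>v. g \<bullet> v - x \<bullet> v) = (\<lambda>v. 0)"
    by (intro differential_zero_maxmin[of u UNIV]) auto
  then show ?thesis by (metis eq_iff_diff_eq_0 vector_eq_rdot)
qed

section \<open>Spindle convexity and the ball dual\<close>

lemma unit_ball_lens_estimate:
  fixes u d v w :: "'a::real_inner"
  defines "w \<equiv> d + ((d \<bullet> d - 2 * (d \<bullet> u)) / 4) *\<^sub>R u"
  assumes u: "norm u = 1" and du: "d \<bullet> u \<le> 0"
    and t: "0 < t" "t \<le> 1/2" "t * (w \<bullet> w) \<le> 1/2" "t * (w \<bullet> w) \<le> (d \<bullet> d + 2 * (d \<bullet> u)) / 2"
    and v: "norm v \<le> 1" "norm (d + v) \<le> 1"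
  shows "norm (v + t *\<^sub>R w) \<le> 1"
proof -
  define \<beta> where "\<beta> = (d \<bullet> d - 2 * (d \<bullet> u)) / 4"
  define \<rho> where "\<rho> = norm v"
  define A where "A = t * (1 - d \<bullet> d) + t\<^sup>2 * (w \<bullet> w)"
  define B where "B = 1 - t * (d \<bullet> d + 2 * (d \<bullet> u)) / 2 + t\<^sup>2 * (w \<bullet> w)"
  have \<rho>: "0 \<le> \<rho>" "\<rho> \<le> 1" using v by (auto simp: \<rho>_def)
  have \<beta>: "0 \<le> \<beta>" unfolding \<beta>_def using du inner_ge_zero[of d] by (intro divide_nonneg_pos) linarith+
  have dv: "2 * (d \<bullet> v) \<le> 1 - \<rho>\<^sup>2 - d \<bullet> d"
    using v(2) power_mono[OF v(2) norm_ge_zero, of 2]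
    by (simp add: \<rho>_def power2_norm_eq_inner inner_add inner_commute)
  have vu: "v \<bullet> u \<le> \<rho>" using norm_cauchy_schwarz[of v u] u by (simp add: \<rho>_def)
  have vw: "v \<bullet> w = d \<bullet> v + \<beta> * (v \<bullet> u)"
    by (simp add: w_def \<beta>_def inner_add_right inner_commute)
  have "(norm (v + t *\<^sub>R w))\<^sup>2 = \<rho>\<^sup>2 + t * (2 * (d \<bullet> v)) + 2 * t * \<beta> * (v \<bullet> u) + t\<^sup>2 * (w \<bullet> w)"
    unfolding \<rho>_def power2_norm_eq_inner
    by (simp add: inner_commute[of w v] vw algebra_simps power2_eq_square)
  also have "\<dots> \<le> \<rho>\<^sup>2 + t * (1 - \<rho>\<^sup>2 - d \<bullet> d) + 2 * t * \<beta> * \<rho> + t\<^sup>2 * (w \<bullet> w)"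
    using dv vu t(1) \<beta> by (intro add_mono mult_left_mono order.refl) auto
  \<comment> \<open>a quadratic in \<rho> with leading coefficient 1 - t \<ge> 0 lies below its chord over [0, 1]\<close>
  also have "\<dots> \<le> (1 - \<rho>) * A + \<rho> * B"
  proof -
    have identity: "\<rho>\<^sup>2 + t * (1 - \<rho>\<^sup>2 - D) + 2 * t * ((D - 2 * E) / 4) * \<rho> + t\<^sup>2 * c
      = (1 - \<rho>) * (t * (1 - D) + t\<^sup>2 * c) + \<rho> * (1 - t * (D + 2 * E) / 2 + t\<^sup>2 * c)
        + (1 - t) * (\<rho>\<^sup>2 - \<rho>)" for D E c :: real
      by (simp add: field_simps power2_eq_square)
    have "(1 - t) * \<rho>\<^sup>2 \<le> (1 - t) * \<rho>"
      using \<rho> t(2) by (intro mult_left_mono) (auto simp: power2_eq_square mult_left_le_one_le)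
    then show ?thesis
      unfolding A_def B_def \<beta>_def identity[of "d \<bullet> d" "d \<bullet> u" "w \<bullet> w"] by (simp add: algebra_simps)
  qed
  also have "\<dots> \<le> 1"
  proof (rule convex_bound_le)
    have "t\<^sup>2 * (w \<bullet> w) \<le> t * (1/2)"
      using t by (simp add: power2_eq_square mult.assoc mult_left_mono)
    moreover have "t * (1 - d \<bullet> d) \<le> t" using t(1) by (simp add: mult_left_le)
    ultimately show "A \<le> 1" using t(2) by (simp add: A_def)
    have "t\<^sup>2 * (w \<bullet> w) \<le> t * ((d \<bullet> d + 2 * (d \<bullet> u)) / 2)"
      using t by (simp add: power2_eq_square mult.assoc mult_left_mono)
    then show "B \<le> 1" by (simp add: B_def)
  qed (use \<rho> in auto)
  finally show ?thesis by (simp add: power_le_one_iff)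
qed

(* For v as below, the unit balls centred at x - v are those containing both x and x + d.
   If x + d lies outside the unit ball centred at x - u, they all contain a common point
   x + w beyond x in direction u. *)
lemma unit_ball_lens_beyond:
  fixes u d :: "'a::real_inner"
  assumes u: "norm u = 1" and du: "d \<bullet> u \<le> 0" and far: "1 < norm (d + u)"
  obtains w where "0 < w \<bullet> u" and "\<And>v. norm v \<le> 1 \<Longrightarrow> norm (d + v) \<le> 1 \<Longrightarrow> norm (v + w) \<le> 1"
proof -
  define w where "w = d + ((d \<bullet> d - 2 * (d \<bullet> u)) / 4) *\<^sub>R u"
  define \<gamma> where "\<gamma> = d \<bullet> d + 2 * (d \<bullet> u)"
  define \<epsilon> where "\<epsilon> = min 1 \<gamma> / 2"
  define t where "t = \<epsilon> / (1 + w \<bullet> w)"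
  have uu: "u \<bullet> u = 1" using u by (simp add: dot_square_norm)
  have "1 < (norm (d + u))\<^sup>2" using far by (simp add: power_less_one_iff less_1_mult power2_eq_square)
  then have \<gamma>: "0 < \<gamma>" by (simp add: \<gamma>_def power2_norm_eq_inner inner_add inner_commute uu)
  have "0 < 1 + w \<bullet> w" by (simp add: add_pos_nonneg)
  then have t: "0 < t" "t * (1 + w \<bullet> w) = \<epsilon>"
    using \<gamma> by (simp_all add: t_def) (simp add: \<epsilon>_def)
  have "0 \<le> t * (w \<bullet> w)" "t + t * (w \<bullet> w) = \<epsilon>" "\<epsilon> \<le> 1/2" "\<epsilon> \<le> \<gamma> / 2"
    using t by (simp_all add: distrib_left \<epsilon>_def)
  then have bounds: "t \<le> 1/2" "t * (w \<bullet> w) \<le> 1/2" "t * (w \<bullet> w) \<le> \<gamma> / 2"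
    using t(1) by linarith+
  show thesis
  proof
    have "w \<bullet> u = \<gamma> / 4" by (simp add: w_def \<gamma>_def inner_add_left uu field_simps)
    then show "0 < (t *\<^sub>R w) \<bullet> u" using t(1) \<gamma> by simp
    fix v assume "norm v \<le> 1" "norm (d + v) \<le> 1"
    then show "norm (v + t *\<^sub>R w) \<le> 1"
      using unit_ball_lens_estimate[OF u du t(1) bounds[unfolded w_def \<gamma>_def]] by (simp add: w_def)
  qed
qed

lemma closed_spindle_class: "K \<in> spindle_class \<Longrightarrow> closed K"
  unfolding spindle_class_def by auto

lemma spindle_class_subset_cball:
  assumes "K \<in> spindle_class" "norm u = 1" "x \<in> K" and x_max: "\<forall>z\<in>K. z \<bullet> u \<le> x \<bullet> u"
  shows "K \<subseteq> cball (x - u) 1"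
proof
  fix z assume "z \<in> K"
  obtain A where K: "K = (\<Inter>a\<in>A. cball a 1)" using assms(1) unfolding spindle_class_def by blast
  show "z \<in> cball (x - u) 1"
  proof (rule ccontr)
    assume "z \<notin> cball (x - u) 1"
    moreover have "x - u - z = - (z - x + u)" by simp
    ultimately have "1 < norm (z - x + u)" by (metis dist_norm mem_cball norm_minus_cancel not_le)
    moreover have "(z - x) \<bullet> u \<le> 0" using x_max \<open>z \<in> K\<close> by (simp add: inner_diff_left)
    ultimately obtain w where w: "0 < w \<bullet> u"
      and lens: "\<And>v. norm v \<le> 1 \<Longrightarrow> norm (z - x + v) \<le> 1 \<Longrightarrow> norm (v + w) \<le> 1"
      using unit_ball_lens_beyond[OF assms(2)] by blast
    have "x + w \<in> cball a 1" if "a \<in> A" for a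
      using lens[of "x - a"] \<open>x \<in> K\<close> \<open>z \<in> K\<close> that unfolding K
      by (auto simp: dist_norm norm_minus_commute algebra_simps)
    then have "x + w \<in> K" unfolding K by blast
    then show False using x_max w by (auto simp: inner_add_left)
  qed
qed

lemma ball_dual_inner_max:
  assumes "K \<in> spindle_class" "norm u = 1" "x \<in> K" "\<forall>z\<in>K. z \<bullet> u \<le> x \<bullet> u"
  shows "x - u \<in> ball_dual K" and "\<forall>y\<in>ball_dual K. y \<bullet> -u \<le> (x - u) \<bullet> -u"
proof -
  show "x - u \<in> ball_dual K"
    using spindle_class_subset_cball[OF assms] by (auto simp: ball_dual_def dist_commute)
  show "\<forall>y\<in>ball_dual K. y \<bullet> -u \<le> (x - u) \<bullet> -u"
  proof
    fix y assume "y \<in> ball_dual K"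
    then have "norm (y - x) \<le> 1" using assms(3) by (auto simp: ball_dual_def dist_norm norm_minus_commute)
    then have "(y - x) \<bullet> -u \<le> 1" using norm_cauchy_schwarz[of "y - x" "-u"] assms(2) by simp
    then show "y \<bullet> -u \<le> (x - u) \<bullet> -u" using assms(2) by (simp add: inner_diff_left dot_square_norm)
  qed
qed

lemma supp_ball_dual:
  fixes K :: "(real^'n) set"
  assumes K: "K \<in> spindle_class" "K \<noteq> {}" "bounded K"
  shows "supp (ball_dual K) w = norm w - supp K (-w)"
proof -
  obtain u :: "real^'n" and c where u: "norm u = 1" and c: "0 \<le> c" and w: "w = c *\<^sub>R -u"
  proof (cases "w = 0")
    case True
    then show ?thesis using that[of "axis undefined 1" 0] by simp
  next
    case False
    then show ?thesis using that[of "- sgn w" "norm w"] by (simp add: norm_sgn sgn_div_norm)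
  qed
  have "compact K" using K closed_spindle_class by (simp add: compact_eq_bounded_closed)
  then obtain x where x: "x \<in> K" "\<forall>z\<in>K. z \<bullet> u \<le> x \<bullet> u"
    using compact_attains_inner_max K(2) by metis
  note y = ball_dual_inner_max[OF K(1) u x]
  have "supp K (-w) = x \<bullet> -w"
    by (rule supp_eq_inner_max) (use x c in \<open>auto simp: w intro: mult_left_mono\<close>)
  moreover have "supp (ball_dual K) w = (x - u) \<bullet> w"
    by (rule supp_eq_inner_max) (use y c in \<open>auto simp: w intro: mult_left_mono\<close>)
  moreover have "norm w = c" "u \<bullet> w = - c"
    using u c unfolding w by (simp_all add: dot_square_norm)
  ultimately show ?thesis by (simp add: inner_diff_left)
qed

section \<open>The Hessian of the dual support function\<close>

definition norm_hessian :: "real^'n \<Rightarrow> real^'n^'n" where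
  "norm_hessian p = inverse (norm p) *\<^sub>R mat 1 - (inverse (norm p))^3 *\<^sub>R (\<chi> i j. p $ i * p $ j)"

lemma norm_hessian_mult_vec:
  "norm_hessian p *v v = inverse (norm p) *\<^sub>R v - (inverse (norm p) ^ 3 * (p \<bullet> v)) *\<^sub>R p"
proof -
  have "(\<chi> i j. p $ i * p $ j) *v v = (p \<bullet> v) *\<^sub>R p"
    by (simp add: vec_eq_iff matrix_vector_mult_def inner_vec_def sum_distrib_left mult_ac)
  then show ?thesis
    unfolding norm_hessian_def matrix_vector_mult_diff_rdistrib
    by (simp only: flip: scaleR_matrix_vector_assoc) simp
qed

lemma norm_hessian_uminus: "norm_hessian (-p) = norm_hessian p"
  by (simp add: norm_hessian_def vec_eq_iff)

lemma continuous_on_norm_hessian: "continuous_on (-{0}) norm_hessian"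
  unfolding norm_hessian_def
  by (intro continuous_intros continuous_on_vec_lambda continuous_on_component) auto

lemma has_derivative_sgn:
  fixes p :: "real^'n"
  assumes "p \<noteq> 0"
  shows "(sgn has_derivative (\<lambda>v. norm_hessian p *v v)) (at p)"
proof -
  have "((\<lambda>q. inverse (norm q) *\<^sub>R q) has_derivative
      (\<lambda>v. inverse (norm p) *\<^sub>R v - (inverse (norm p) * (v \<bullet> sgn p) * inverse (norm p)) *\<^sub>R p)) (at p)"
    using assms by (auto intro!: derivative_eq_intros has_derivative_norm)
  moreover have "v \<bullet> sgn p = inverse (norm p) * (p \<bullet> v)" for v
    by (simp add: sgn_div_norm inner_commute divide_inverse_commute)
  moreover have "sgn = (\<lambda>q::real^'n. inverse (norm q) *\<^sub>R q)"
    by (simp add: fun_eq_iff sgn_div_norm divide_inverse_commute)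
  ultimately show ?thesis
    by (simp add: norm_hessian_mult_vec power3_eq_cube mult_ac)
qed

lemma has_derivative_norm_minus_reflect:
  assumes "q \<noteq> 0" "(f has_derivative (\<lambda>v. g \<bullet> v)) (at (-q))"
  shows "((\<lambda>w. norm w - f (-w)) has_derivative (\<lambda>v. (sgn q + g) \<bullet> v)) (at q)"
proof -
  have "((\<lambda>w. norm w - f (-w)) has_derivative (\<lambda>v. v \<bullet> sgn q - g \<bullet> -v)) (at q)"
    using assms by (auto intro!: derivative_eq_intros has_derivative_norm
        has_derivative_compose[of uminus _ _ _ f, unfolded o_def])
  then show ?thesis by (simp add: inner_add_right inner_commute)
qed

lemma has_derivative_sgn_plus_reflect:
  fixes G :: "real^'n \<Rightarrow> real^'n"
  assumes "q \<noteq> 0" "(G has_derivative (\<lambda>v. H *v v)) (at (-q))"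
  shows "((\<lambda>w. sgn w + G (-w)) has_derivative (\<lambda>v. (norm_hessian q - H) *v v)) (at q)"
proof -
  have "((\<lambda>w. sgn w + G (-w)) has_derivative (\<lambda>v. norm_hessian q *v v + H *v -v)) (at q)"
    using assms by (auto intro!: derivative_eq_intros has_derivative_sgn
        has_derivative_compose[of uminus _ _ _ G, unfolded o_def])
  then show ?thesis by (simp add: matrix_vector_mult_diff_rdistrib vec.neg)
qed

lemma C2_near_norm_minus_reflect:
  fixes f :: "real^'n \<Rightarrow> real"
  defines "g \<equiv> \<lambda>w. norm w - f (-w)"
  assumes C2: "C2_near f u" and "u \<noteq> 0"
  shows "C2_near g (-u)"
    and "grad g (-u) = grad f u - sgn u"
    and "hess g (-u) = norm_hessian u - hess f u"
proof -
  obtain U G H where U: "open U" "u \<in> U"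
    and G: "\<forall>p\<in>U. (f has_derivative (\<lambda>v. G p \<bullet> v)) (at p)"
    and H: "\<forall>p\<in>U. (G has_derivative (\<lambda>v. H p *v v)) (at p)"
    and H_cont: "continuous_on U H"
    using C2 unfolding C2_near_def by blast
  define U' where "U' = uminus ` U - {0}"
  define G' where "G' q = sgn q + G (-q)" for q
  define H' where "H' q = norm_hessian q - H (-q)" for q
  have U': "open U'" "-u \<in> U'"
    using U \<open>u \<noteq> 0\<close> by (auto simp: U'_def open_negations)
  have U'_mem: "q \<noteq> 0" "-q \<in> U" if "q \<in> U'" for q
    using that by (auto simp: U'_def image_iff)
  have G': "\<forall>q\<in>U'. (g has_derivative (\<lambda>v. G' q \<bullet> v)) (at q)"
    using U'_mem G unfolding g_def G'_def by (auto intro: has_derivative_norm_minus_reflect)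
  have H': "\<forall>q\<in>U'. (G' has_derivative (\<lambda>v. H' q *v v)) (at q)"
    using U'_mem H unfolding G'_def H'_def by (auto intro: has_derivative_sgn_plus_reflect)
  have "continuous_on U' H'"
    unfolding H'_def using U'_mem
    by (intro continuous_on_diff continuous_on_subset[OF continuous_on_norm_hessian]
        continuous_on_compose2[OF H_cont] continuous_intros) auto
  then show "C2_near g (-u)" unfolding C2_near_def using U' G' H' by blast
  have "grad f u = G u" "hess f u = H u" using grad_hess_eqI[OF U G] H U(2) by auto
  moreover have "grad g (-u) = G' (-u)" "hess g (-u) = H' (-u)"
    using grad_hess_eqI[OF U' G', of "H' (-u)"] H' U'(2) by auto
  ultimately show "grad g (-u) = grad f u - sgn u" "hess g (-u) = norm_hessian u - hess f u"
    by (simp_all add: G'_def H'_def sgn_minus norm_hessian_uminus)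
qed

section \<open>Ordered eigenvalues\<close>

definition orthonormal_on :: "'i set \<Rightarrow> ('i \<Rightarrow> 'a::real_inner) \<Rightarrow> bool" where
  "orthonormal_on I e \<longleftrightarrow> (\<forall>i\<in>I. \<forall>j\<in>I. e i \<bullet> e j = (if i = j then 1 else 0))"

lemma orthonormal_on_subset: "orthonormal_on I e \<Longrightarrow> J \<subseteq> I \<Longrightarrow> orthonormal_on J e"
  unfolding orthonormal_on_def by blast

lemma orthonormal_on_inj: "orthonormal_on I e \<Longrightarrow> inj_on e I"
  unfolding orthonormal_on_def by (rule inj_onI) (metis zero_neq_one)

lemma inner_sum_orthonormal:
  assumes "finite I" "orthonormal_on I e"
  shows "(\<Sum>i\<in>I. a i *\<^sub>R e i) \<bullet> (\<Sum>j\<in>I. b j *\<^sub>R e j) = (\<Sum>i\<in>I. a i * b i)"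
proof -
  have "(\<Sum>i\<in>I. a i *\<^sub>R e i) \<bullet> (\<Sum>j\<in>I. b j *\<^sub>R e j) = (\<Sum>j\<in>I. \<Sum>i\<in>I. a i * b j * (e i \<bullet> e j))"
    by (simp add: inner_sum_left inner_sum_right sum_distrib_left mult_ac)
  also have "\<dots> = (\<Sum>i\<in>I. \<Sum>j\<in>I. a i * b j * (e i \<bullet> e j))"
    by (rule sum.swap)
  also have "\<dots> = (\<Sum>i\<in>I. \<Sum>j\<in>I. if i = j then a i * b i else 0)"
    using assms(2) by (intro sum.cong refl) (auto simp: orthonormal_on_def)
  finally show ?thesis using assms(1) by simp
qed

lemma span_orthonormal_sum:
  assumes "finite I" "orthonormal_on I e" "v \<in> span (e ` I)"
  obtains c where "v = (\<Sum>i\<in>I. c i *\<^sub>R e i)"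
proof -
  obtain c where "v = (\<Sum>w\<in>e ` I. c w *\<^sub>R w)" using assms(1,3) span_finite[of "e ` I"] by auto
  then have "v = (\<Sum>i\<in>I. c (e i) *\<^sub>R e i)"
    by (simp add: sum.reindex[OF orthonormal_on_inj[OF assms(2)]])
  then show thesis by (rule that)
qed

lemma dim_span_orthonormal:
  assumes "finite I" "orthonormal_on I e"
  shows "dim (e ` I) = card I"
proof -
  have "pairwise orthogonal (e ` I)"
    using assms(2) by (auto simp: orthonormal_on_def pairwise_def orthogonal_def)
  moreover have "0 \<notin> e ` I"
    using assms(2) by (force simp: orthonormal_on_def)
  ultimately have "independent (e ` I)"
    by (rule pairwise_orthogonal_independent)
  then show ?thesis
    using card_image[OF orthonormal_on_inj[OF assms(2)]] by (simp add: dim_eq_card_independent)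
qed

lemma inner_le_of_orthonormal_eigenvectors:
  assumes "linear A" "finite I" "orthonormal_on I e" "\<forall>i\<in>I. A (e i) = r i *\<^sub>R e i"
    and "\<forall>i\<in>I. r i \<le> \<mu>" "v \<in> span (e ` I)"
  shows "A v \<bullet> v \<le> \<mu> * (v \<bullet> v)"
proof -
  obtain c where v: "v = (\<Sum>i\<in>I. c i *\<^sub>R e i)" using span_orthonormal_sum assms(2,3,6) by blast
  have "A v = (\<Sum>i\<in>I. (c i * r i) *\<^sub>R e i)"
    using assms(4) by (simp add: v linear_sum[OF assms(1)] linear_scale[OF assms(1)])
  then have "A v \<bullet> v = (\<Sum>i\<in>I. c i * c i * r i)"
    using inner_sum_orthonormal[OF assms(2,3)] v by (simp add: mult_ac)
  also have "\<dots> \<le> (\<Sum>i\<in>I. c i * c i * \<mu>)"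
    using assms(5) by (intro sum_mono mult_left_mono) auto
  also have "\<dots> = \<mu> * (v \<bullet> v)"
    using inner_sum_orthonormal[OF assms(2,3)] v by (simp add: sum_distrib_left mult_ac)
  finally show ?thesis .
qed

lemma inner_ge_of_orthonormal_eigenvectors:
  assumes "linear A" "finite I" "orthonormal_on I e" "\<forall>i\<in>I. A (e i) = r i *\<^sub>R e i"
    and "\<forall>i\<in>I. \<mu> \<le> r i" "v \<in> span (e ` I)"
  shows "\<mu> * (v \<bullet> v) \<le> A v \<bullet> v"
  using inner_le_of_orthonormal_eigenvectors[of "\<lambda>v. - A v" I e "\<lambda>i. - r i" "- \<mu>" v]
    assms linear_compose_neg[OF assms(1)] by (simp add: linear_neg[OF assms(1)])

definition sorted_eigenbasis ::
    "('a::real_inner \<Rightarrow> 'a) \<Rightarrow> 'a set \<Rightarrow> nat \<Rightarrow> (nat \<Rightarrow> 'a) \<Rightarrow> (nat \<Rightarrow> real) \<Rightarrow> bool" where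
  "sorted_eigenbasis A P m e r \<longleftrightarrow> e ` {1..m} \<subseteq> P \<and> orthonormal_on {1..m} e \<and>
     (\<forall>i\<in>{1..m}. A (e i) = r i *\<^sub>R e i) \<and> mono_on {1..m} r"

lemma sorted_eigenbasis_eigenvalue_le:
  fixes A :: "'a::euclidean_space \<Rightarrow> 'a"
  assumes A: "linear A" and P: "subspace P" "dim P = m"
    and e: "sorted_eigenbasis A P m e r" and g: "sorted_eigenbasis A P m g t"
    and k: "k \<in> {1..m}"
  shows "t k \<le> r k"
proof (rule ccontr)
  \<comment> \<open>Courant-Fischer: the spans of e 1..e k and of g k..g m have dimensions adding up to
    m + 1 inside P, so they share a vector v \<noteq> 0, and t k |v|^2 \<le> <A v, v> \<le> r k |v|^2\<close>
  assume "\<not> t k \<le> r k"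
  define V where "V = span (e ` {1..k})"
  define W where "W = span (g ` {k..m})"
  have sub: "{1..k} \<subseteq> {1..m}" "{k..m} \<subseteq> {1..m}" using k by auto
  have "orthonormal_on {1..k} e" "orthonormal_on {k..m} g"
    using e g sub by (auto simp: sorted_eigenbasis_def intro: orthonormal_on_subset)
  then have "dim V = k" "dim W = m + 1 - k"
    by (simp_all add: V_def W_def dim_span_orthonormal)
  moreover have "dim {x + y |x y. x \<in> V \<and> y \<in> W} \<le> m"
  proof -
    have "e ` {1..k} \<subseteq> P" "g ` {k..m} \<subseteq> P" using e g sub by (auto simp: sorted_eigenbasis_def)
    then have "V \<subseteq> P" "W \<subseteq> P" using P(1) by (simp_all add: V_def W_def span_minimal)
    then have "{x + y |x y. x \<in> V \<and> y \<in> W} \<subseteq> P" using subspace_add[OF P(1)] by blast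
    then show ?thesis using dim_subset P(2) by blast
  qed
  moreover have "dim {x + y |x y. x \<in> V \<and> y \<in> W} + dim (V \<inter> W) = dim V + dim W"
    unfolding V_def W_def by (rule dim_sums_Int) auto
  ultimately have "dim (V \<inter> W) \<noteq> 0" using k by (auto simp del: dim_eq_0)
  then obtain v where v: "v \<in> V" "v \<in> W" "v \<noteq> 0" using dim_eq_0[of "V \<inter> W"] by auto
  have "A v \<bullet> v \<le> r k * (v \<bullet> v)"
    using e sub k v(1) unfolding V_def sorted_eigenbasis_def
    by (intro inner_le_of_orthonormal_eigenvectors[OF A])
      (auto intro: orthonormal_on_subset mono_onD)
  moreover have "t k * (v \<bullet> v) \<le> A v \<bullet> v"
    using g sub k v(2) unfolding W_def sorted_eigenbasis_def
    by (intro inner_ge_of_orthonormal_eigenvectors[OF A])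
      (auto intro: orthonormal_on_subset mono_onD)
  moreover have "0 < v \<bullet> v" using \<open>v \<noteq> 0\<close> by simp
  ultimately show False using \<open>\<not> t k \<le> r k\<close> by (meson less_le_trans mult_less_cancel_right not_le)
qed

lemma sorted_eigenbasis_eigenvalues_unique:
  fixes A :: "'a::euclidean_space \<Rightarrow> 'a"
  assumes "linear A" "subspace P" "dim P = m"
    and "sorted_eigenbasis A P m e r" "sorted_eigenbasis A P m g t" "k \<in> {1..m}"
  shows "r k = t k"
  using sorted_eigenbasis_eigenvalue_le[OF assms(1-3)] assms(4-6) by (meson order.antisym)

lemma sorted_eigenbasis_complement:
  assumes e: "sorted_eigenbasis A P m e r" and B: "\<forall>v\<in>P. B v = v - A v"
  shows "sorted_eigenbasis B P m (\<lambda>i. e (m + 1 - i)) (\<lambda>i. 1 - r (m + 1 - i))"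
proof -
  have flip: "m + 1 - i \<in> {1..m}" if "i \<in> {1..m}" for i using that by auto
  have "m + 1 - i = m + 1 - j \<longleftrightarrow> i = j" if "i \<in> {1..m}" "j \<in> {1..m}" for i j
    using that by auto
  then have "orthonormal_on {1..m} (\<lambda>i. e (m + 1 - i))"
    using e flip unfolding sorted_eigenbasis_def orthonormal_on_def by metis
  moreover have "mono_on {1..m} (\<lambda>i. 1 - r (m + 1 - i))"
  proof (rule mono_onI)
    fix i j assume "i \<in> {1..m}" "j \<in> {1..m}" "i \<le> j"
    then have "r (m + 1 - j) \<le> r (m + 1 - i)"
      using e flip unfolding sorted_eigenbasis_def by (intro mono_onD[of _ r]) auto
    then show "1 - r (m + 1 - i) \<le> 1 - r (m + 1 - j)" by simp
  qed
  moreover have "B (e (m + 1 - i)) = (1 - r (m + 1 - i)) *\<^sub>R e (m + 1 - i)" if "i \<in> {1..m}" for i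
  proof -
    have "e (m + 1 - i) \<in> P" "A (e (m + 1 - i)) = r (m + 1 - i) *\<^sub>R e (m + 1 - i)"
      using e flip[OF that] by (auto simp: sorted_eigenbasis_def)
    then show ?thesis using B by (simp add: scaleR_diff_left)
  qed
  ultimately show ?thesis using e flip by (auto simp: sorted_eigenbasis_def)
qed

lemma principal_radiiE:
  fixes T :: "(real^'n) set"
  assumes "principal_radii T w r"
  obtains e where "sorted_eigenbasis (\<lambda>v. hess (supp T) w *v v) {x. w \<bullet> x = 0} (CARD('n) - 1) e r"
proof -
  obtain e :: "nat \<Rightarrow> real^'n" where
    e: "\<forall>i\<in>{1..CARD('n) - 1}. e i \<bullet> w = 0 \<and> hess (supp T) w *v e i = r i *\<^sub>R e i"
    and "orthonormal_on {1..CARD('n) - 1} e"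
    using assms unfolding principal_radii_def orthonormal_on_def by blast
  moreover have "mono_on {1..CARD('n) - 1} r"
    using assms unfolding principal_radii_def by (auto intro!: mono_onI)
  moreover have "e ` {1..CARD('n) - 1} \<subseteq> {x. w \<bullet> x = 0}" using e by (auto simp: inner_commute)
  ultimately show thesis using e by (intro that) (auto simp: sorted_eigenbasis_def)
qed

lemma principal_radii_complementary:
  fixes K K' :: "(real^'n) set" and u :: "real^'n"
  assumes u: "norm u = 1" and hess: "hess (supp K') (-u) = norm_hessian u - hess (supp K) u"
    and r: "principal_radii K u r" and s: "principal_radii K' (-u) s"
    and i: "i \<in> {1..CARD('n) - 1}"
  shows "r i + s (CARD('n) - i) = 1"
proof -
  define m where "m = CARD('n) - 1"
  define P where "P = {x::real^'n. u \<bullet> x = 0}"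
  obtain e where e: "sorted_eigenbasis (\<lambda>v. hess (supp K) u *v v) P m e r"
    using principal_radiiE[OF r] unfolding P_def m_def by blast
  obtain f where f: "sorted_eigenbasis (\<lambda>v. hess (supp K') (-u) *v v) P m f s"
    using principal_radiiE[OF s] unfolding P_def m_def by auto
  have "\<forall>v\<in>P. hess (supp K) u *v v = v - hess (supp K') (-u) *v v"
    using u by (simp add: P_def hess matrix_vector_mult_diff_rdistrib norm_hessian_mult_vec)
  from sorted_eigenbasis_complement[OF f this]
  have "sorted_eigenbasis (\<lambda>v. hess (supp K) u *v v) P m (\<lambda>j. f (m + 1 - j)) (\<lambda>j. 1 - s (m + 1 - j))" .
  moreover have "u \<noteq> 0" using u by auto
  then have "subspace P" "dim P = m"
    by (simp_all add: P_def m_def subspace_hyperplane dim_hyperplane)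
  ultimately have "r i = 1 - s (m + 1 - i)"
    using sorted_eigenbasis_eigenvalues_unique[OF matrix_vector_mul_linear _ _ e] i
    unfolding m_def by blast
  moreover have "m + 1 - i = CARD('n) - i" using i by (simp add: m_def)
  ultimately show ?thesis by simp
qed

theorem theorem4p27:
  fixes K :: "(real^'n) set" and u x y :: "real^'n"
  assumes "CARD('n) \<ge> 2"
    and "K \<in> spindle_class" and "K \<noteq> {}" and "bounded K"
    and "norm u = 1"
    and "C2_near (supp K) u"
    and "x = grad (supp K) u" and "y = x - u"
  shows "x \<in> frontier K \<and> y \<in> frontier (ball_dual K) \<and>
         C2_near (supp (ball_dual K)) (-u) \<and> grad (supp (ball_dual K)) (-u) = y \<and>
         (\<forall>r s. principal_radii K u r \<longrightarrow> principal_radii (ball_dual K) (-u) s \<longrightarrow>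
            (\<forall>i\<in>{1..CARD('n) - 1}. r i + s (CARD('n) - i) = 1))"
proof -
  have "u \<noteq> 0" "sgn u = u" using \<open>norm u = 1\<close> by (auto simp: sgn_div_norm)
  have "compact K" using assms(2,4) closed_spindle_class by (simp add: compact_eq_bounded_closed)
  then obtain x0 where x0: "x0 \<in> K" "\<forall>z\<in>K. z \<bullet> u \<le> x0 \<bullet> u"
    using compact_attains_inner_max \<open>K \<noteq> {}\<close> by metis
  have "x = x0"
    using grad_supp_eq_inner_max[OF \<open>bounded K\<close> C2_near_has_derivative_grad x0] assms(6,7) by simp
  with x0 have x: "x \<in> K" "\<forall>z\<in>K. z \<bullet> u \<le> x \<bullet> u" by simp_all
  note y = ball_dual_inner_max[OF assms(2,5) x, folded \<open>y = x - u\<close>]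
  have "supp (ball_dual K) = (\<lambda>w. norm w - supp K (-w))"
    using supp_ball_dual[OF assms(2-4)] by (rule ext)
  note dual = C2_near_norm_minus_reflect[OF assms(6) \<open>u \<noteq> 0\<close>, folded this]
  have "x \<in> frontier K" using inner_max_in_frontier[OF x(1) \<open>u \<noteq> 0\<close> x(2)] .
  moreover have "y \<in> frontier (ball_dual K)" using inner_max_in_frontier[OF y(1) _ y(2)] \<open>u \<noteq> 0\<close> by simp
  moreover have "grad (supp (ball_dual K)) (-u) = y" using dual(2) \<open>sgn u = u\<close> assms(7,8) by simp
  ultimately show ?thesis using dual(1) principal_radii_complementary[OF assms(5) dual(3)] by blast
qed

end
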